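(* Let $X$ and $Y$ be objects of an $R$-linear triangulated category $\mathsf{T}$ with $\operatorname{Hom}^*_{\mathsf{T}}(X,Y)$ in $\mathsf{art}^{\mathsf{fl}}(R)$, and let $z\in R^d$. If for all $n\ll0$ there are short exact sequences $$0\to\operatorname{Hom}_{\mathsf{T}}(X,\Sigma^n(Y/\!\!/z))\to\operatorname{Hom}_{\mathsf{T}}(X,\Sigma^{n+1}Y)\to\operatorname{Hom}_{\mathsf{T}}(X,\Sigma^{n+d+1}Y)\to0$$ (of $R^0$-modules), then $h(X,Y/\!\!/z)(n)=h(X,Y)(n+d+1)-h(X,Y)(n+1)$ for all $n\ll0$, and for every $s\ge1$ one has $\Delta^{-s+1}h(X,Y/\!\!/z)(n)=-\Delta^{-s}h(X,Y)(n)$ for all $n\ll0$.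
   Context: $R=\bigoplus_{n\ge 0}R^n$ is a graded-commutative Noetherian ring generated over $R^0$ by $R^d$, $d\ge2$ even (standing assumption). $\mathsf{T}$ is a triangulated category with suspension $\Sigma$ that is $R$-linear: a graded ring homomorphism $\phi$ from $R$ to the graded center of $\mathsf{T}$ (degree-$n$ elements: natural transformations $\eta:\mathrm{id}\to\Sigma^n$ with $\eta\Sigma=(-1)^n\Sigma\eta$), giving $\phi_Y:R\to\operatorname{Hom}^*_{\mathsf{T}}(Y,Y)$ and making $\operatorname{Hom}^*_{\mathsf{T}}(X,Y)=\bigoplus_n\operatorname{Hom}_{\mathsf{T}}(X,\Sigma^nY)$ a graded $R$-module. $\lambda^n(X,Y)=\ell_{R^0}\operatorname{Hom}_{\mathsf{T}}(X,\Sigma^nY)$. $\mathsf{art}^{\mathsf{fl}}(R)$: $\bigoplus_{n\le n_0}\operatorname{Hom}_{\mathsf{T}}(X,\Sigma^nY)$ is Artinian over $R$ for some $n_0$ and all $\lambda^n(X,Y)<\infty$. $Y/\!\!/z$ is defined by a distinguished triangle $Y\xrightarrow{\phi_Y(z)}\Sigma^dY\to Y/\!\!/z\to\Sigma Y$. $h(X,Y)(n)=\sum_{i=0}^{d-1}(-1)^{n+i}\lambda^{n+i}(X,Y)$. Negative difference operator: $\Delta^{-1}f(n)=f(n+1)-f(n+d+1)$, $\Delta^0f=f$, $\Delta^{-s}f=\Delta^{-1}(\Delta^{-s+1}f)$ for $s\ge1$. *)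

theory Defs
  imports "HOL-Algebra.Module" "HOL-Library.Extended_Nat"
begin

definition module_linear ::
  "('r, 'c) ring_scheme \<Rightarrow> ('r, 'a) module \<Rightarrow> ('r, 'b) module \<Rightarrow> ('a \<Rightarrow> 'b) \<Rightarrow> bool" where
  "module_linear R M N f \<longleftrightarrow>
     (\<forall>x\<in>carrier M. f x \<in> carrier N) \<and>
     (\<forall>x\<in>carrier M. \<forall>y\<in>carrier M. f (x \<oplus>\<^bsub>M\<^esub> y) = f x \<oplus>\<^bsub>N\<^esub> f y) \<and>
     (\<forall>a\<in>carrier R. \<forall>x\<in>carrier M. f (a \<odot>\<^bsub>M\<^esub> x) = a \<odot>\<^bsub>N\<^esub> f x)"

definition short_exact ::
  "('r, 'c) ring_scheme \<Rightarrow> ('r, 'a) module \<Rightarrow> ('r, 'b) module \<Rightarrow> ('r, 'e) module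
     \<Rightarrow> ('a \<Rightarrow> 'b) \<Rightarrow> ('b \<Rightarrow> 'e) \<Rightarrow> bool" where
  "short_exact R A B C f g \<longleftrightarrow>
     module_linear R A B f \<and> module_linear R B C g \<and>
     inj_on f (carrier A) \<and> g ` carrier B = carrier C \<and>
     f ` carrier A = {y \<in> carrier B. g y = \<zero>\<^bsub>C\<^esub>}"

definition mod_length :: "('r, 'c) ring_scheme \<Rightarrow> ('r, 'a) module \<Rightarrow> enat" where
  "mod_length R M = Sup {enat k | k. \<exists>C :: 'a set list. length C = Suc k \<and>
      (\<forall>i < Suc k. submodule (C ! i) R M) \<and> (\<forall>i < k. C ! i \<subset> C ! Suc i)}"

text \<open>lambda^n(X,Y) = length over R0 of Hom(X, Sigma^n Y).  Hom is the Hom-module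
  functor of the category, Sig n the n-th power of the suspension.\<close>
definition lam ::
  "('r, 'c) ring_scheme \<Rightarrow> ('o \<Rightarrow> 'o \<Rightarrow> ('r, 'm) module) \<Rightarrow> (int \<Rightarrow> 'o \<Rightarrow> 'o)
     \<Rightarrow> int \<Rightarrow> 'o \<Rightarrow> 'o \<Rightarrow> enat" where
  "lam R Hom Sig n X Y = mod_length R (Hom X (Sig n Y))"

definition hfun ::
  "nat \<Rightarrow> ('r, 'c) ring_scheme \<Rightarrow> ('o \<Rightarrow> 'o \<Rightarrow> ('r, 'm) module) \<Rightarrow> (int \<Rightarrow> 'o \<Rightarrow> 'o)
     \<Rightarrow> 'o \<Rightarrow> 'o \<Rightarrow> int \<Rightarrow> int" where
  "hfun d R Hom Sig X Y n =
     (\<Sum>i<d. (if even (n + int i) then 1 else -1) * int (the_enat (lam R Hom Sig (n + int i) X Y)))"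

fun delta_neg :: "nat \<Rightarrow> nat \<Rightarrow> (int \<Rightarrow> int) \<Rightarrow> int \<Rightarrow> int" where
  "delta_neg d 0 f = f"
| "delta_neg d (Suc s) f = (\<lambda>n. delta_neg d s f (n + 1) - delta_neg d s f (n + int d + 1))"

end

theory Submission
  imports Defs "HOL-Algebra.AbelCoset"
begin

text \<open>Length is additive on short exact sequences \<open>0 \<rightarrow> A \<rightarrow> B \<rightarrow> C \<rightarrow> 0\<close>: chains of
  submodules of \<open>A\<close> and \<open>C\<close> splice (images under \<open>f\<close>, then preimages under \<open>g\<close>) to a chain
  in \<open>B\<close>; conversely, a strict inclusion of submodules of \<open>B\<close> stays strict after pulling
  back along \<open>f\<close> or after pushing forward along \<open>g\<close>, so every chain in \<open>B\<close> is dominated by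
  a pair of chains in \<open>A\<close> and \<open>C\<close>.  Hence \<open>\<lambda>^n(X, Y//z) = \<lambda>^(n+1)(X, Y) - \<lambda>^(n+d+1)(X, Y)\<close>
  for all sufficiently negative \<open>n\<close>.  As \<open>d\<close> is even, shifting the summation window of \<open>h\<close>
  by \<open>1\<close> or by \<open>d + 1\<close> flips every sign, which gives the formula for \<open>h\<close>; the one for
  \<open>\<Delta>^(-s)\<close> follows since \<open>\<Delta>^(-s+1) F (n)\<close> only involves \<open>F\<close> at arguments at most
  \<open>n + (s - 1)(d + 1)\<close>.\<close>

lemma module_linear_abelian_group_hom:
  assumes "Module.module R M" and "Module.module R N" and "module_linear R M N f"
  shows "abelian_group_hom M N f"
proof -
  interpret M: Module.module R M by fact
  interpret N: Module.module R N by fact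
  show ?thesis
    using assms(3) unfolding module_linear_def
    by (intro abelian_group_homI M.abelian_group_axioms N.abelian_group_axioms
          group_hom.intro group_hom_axioms.intro M.a_group N.a_group) (auto simp: hom_def)
qed

lemma submodule_zero_closed:
  assumes "submodule H R M"
  shows "\<zero>\<^bsub>M\<^esub> \<in> H"
  using subgroup.one_closed[OF submodule.axioms(1)[OF assms]] by simp

lemma submodule_image:
  assumes M: "Module.module R M" and N: "Module.module R N" and f: "module_linear R M N f"
    and H: "submodule H R M"
  shows "submodule (f ` H) R N"
proof -
  interpret M: Module.module R M by fact
  interpret N: Module.module R N by fact
  interpret f: abelian_group_hom M N f
    using module_linear_abelian_group_hom[OF M N f] .
  have sub: "H \<subseteq> carrier M" using M.submoduleE(1)[OF H] .
  have smult: "f (a \<odot>\<^bsub>M\<^esub> x) = a \<odot>\<^bsub>N\<^esub> f x" if "a \<in> carrier R" "x \<in> carrier M" for a x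
    using f that unfolding module_linear_def by blast
  show ?thesis
  proof (rule N.submoduleI)
    show "f ` H \<subseteq> carrier N" using sub by auto
    show "\<zero>\<^bsub>N\<^esub> \<in> f ` H" using submodule_zero_closed[OF H] f.hom_zero by (metis imageI)
    show "\<ominus>\<^bsub>N\<^esub> y \<in> f ` H" if "y \<in> f ` H" for y
      using that sub M.submoduleE(3)[OF H] by (auto simp flip: f.hom_a_inv)
    show "y \<oplus>\<^bsub>N\<^esub> z \<in> f ` H" if y: "y \<in> f ` H" and z: "z \<in> f ` H" for y z
    proof -
      obtain a b where ab: "a \<in> H" "b \<in> H" and "y = f a" "z = f b" using y z by blast
      moreover have "a \<in> carrier M" "b \<in> carrier M" using ab sub by auto
      ultimately have "y \<oplus>\<^bsub>N\<^esub> z = f (a \<oplus>\<^bsub>M\<^esub> b)" by simp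
      moreover have "a \<oplus>\<^bsub>M\<^esub> b \<in> H" using M.submoduleE(5)[OF H] ab .
      ultimately show ?thesis by blast
    qed
    show "a \<odot>\<^bsub>N\<^esub> y \<in> f ` H" if "a \<in> carrier R" "y \<in> f ` H" for a y
      using that sub M.submoduleE(4)[OF H] by (auto simp flip: smult)
  qed
qed

lemma submodule_vimage:
  assumes M: "Module.module R M" and N: "Module.module R N" and f: "module_linear R M N f"
    and H: "submodule H R N"
  shows "submodule {x \<in> carrier M. f x \<in> H} R M"
proof -
  interpret M: Module.module R M by fact
  interpret N: Module.module R N by fact
  interpret f: abelian_group_hom M N f
    using module_linear_abelian_group_hom[OF M N f] .
  have smult: "f (a \<odot>\<^bsub>M\<^esub> x) = a \<odot>\<^bsub>N\<^esub> f x" if "a \<in> carrier R" "x \<in> carrier M" for a x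
    using f that unfolding module_linear_def by blast
  show ?thesis
    by (rule M.submoduleI)
      (use submodule_zero_closed[OF H] N.submoduleE(3-5)[OF H] smult in auto)
qed

lemma short_exact_submodule_eq:
  assumes B: "Module.module R B" and C: "Module.module R C"
    and ses: "short_exact R A B C f g"
    and U: "submodule U R B" and V: "submodule V R B" and "U \<subseteq> V"
    and vimage_eq: "{x \<in> carrier A. f x \<in> U} = {x \<in> carrier A. f x \<in> V}"
    and image_eq: "g ` U = g ` V"
  shows "U = V"
proof
  interpret B: Module.module R B by fact
  interpret C: Module.module R C by fact
  interpret g: abelian_group_hom B C g
    using module_linear_abelian_group_hom[OF B C] ses unfolding short_exact_def by blast
  have ker: "f ` carrier A = {y \<in> carrier B. g y = \<zero>\<^bsub>C\<^esub>}"
    using ses unfolding short_exact_def by blast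
  show "V \<subseteq> U"
  proof
    fix v assume v: "v \<in> V"
    have vB: "v \<in> carrier B" using v B.submoduleE(1)[OF V] by blast
    have "g v \<in> g ` U" using image_eq v by simp
    then obtain u where u: "g v = g u" "u \<in> U" by (rule imageE)
    have uB: "u \<in> carrier B" using u B.submoduleE(1)[OF U] by blast
    have "g (v \<ominus>\<^bsub>B\<^esub> u) = \<zero>\<^bsub>C\<^esub>"
      using u vB uB by (simp add: a_minus_def C.r_neg)
    then have "v \<ominus>\<^bsub>B\<^esub> u \<in> f ` carrier A" using ker vB uB by simp
    then obtain a where a: "v \<ominus>\<^bsub>B\<^esub> u = f a" "a \<in> carrier A" by (rule imageE)
    have "v \<ominus>\<^bsub>B\<^esub> u \<in> V"
      using v u \<open>U \<subseteq> V\<close> B.submoduleE(3,5)[OF V] unfolding a_minus_def by blast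
    then have "a \<in> {x \<in> carrier A. f x \<in> U}" using a vimage_eq by simp
    then have "(v \<ominus>\<^bsub>B\<^esub> u) \<oplus>\<^bsub>B\<^esub> u \<in> U" using a u B.submoduleE(5)[OF U] by simp
    then show "v \<in> U" using vB uB by (simp add: a_minus_def B.a_assoc B.l_neg)
  qed
qed (fact)

definition submodule_chain ::
  "('r, 'c) ring_scheme \<Rightarrow> ('r, 'a) module \<Rightarrow> (nat \<Rightarrow> 'a set) \<Rightarrow> nat \<Rightarrow> bool" where
  "submodule_chain R M F k \<longleftrightarrow> (\<forall>i\<le>k. submodule (F i) R M) \<and> (\<forall>i<k. F i \<subset> F (Suc i))"

definition chain_lengths :: "('r, 'c) ring_scheme \<Rightarrow> ('r, 'a) module \<Rightarrow> nat set" where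
  "chain_lengths R M = {k. \<exists>F. submodule_chain R M F k}"

lemma mod_length_eq_Sup_chain_lengths:
  fixes R :: "('r, 'c) ring_scheme" and M :: "('r, 'a) module"
  shows "mod_length R M = Sup (enat ` chain_lengths R M)"
proof -
  have "(\<exists>C :: 'a set list. length C = Suc k \<and>
      (\<forall>i < Suc k. submodule (C ! i) R M) \<and> (\<forall>i < k. C ! i \<subset> C ! Suc i)) \<longleftrightarrow>
      (\<exists>F. submodule_chain R M F k)" for k
  proof
    assume "\<exists>C :: 'a set list. length C = Suc k \<and>
      (\<forall>i < Suc k. submodule (C ! i) R M) \<and> (\<forall>i < k. C ! i \<subset> C ! Suc i)"
    then obtain C :: "'a set list" where "submodule_chain R M (\<lambda>i. C ! i) k"
      unfolding submodule_chain_def by (auto simp: less_Suc_eq_le)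
    then show "\<exists>F. submodule_chain R M F k" by blast
  next
    assume "\<exists>F. submodule_chain R M F k"
    then obtain F where "submodule_chain R M F k" ..
    then show "\<exists>C :: 'a set list. length C = Suc k \<and>
      (\<forall>i < Suc k. submodule (C ! i) R M) \<and> (\<forall>i < k. C ! i \<subset> C ! Suc i)"
      unfolding submodule_chain_def
      by (intro exI[of _ "map F [0..<Suc k]"]) (auto simp del: upt_Suc simp: less_Suc_eq_le)
  qed
  then show ?thesis unfolding mod_length_def chain_lengths_def by (simp add: image_def, metis)
qed

lemma zero_in_chain_lengths:
  assumes "Module.module R M"
  shows "0 \<in> chain_lengths R M"
proof -
  interpret M: Module.module R M by fact
  have "submodule_chain R M (\<lambda>_. carrier M) 0"
    unfolding submodule_chain_def using M.carrier_is_submodule by simp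
  then show ?thesis unfolding chain_lengths_def by blast
qed

lemma submodule_chain_extend:
  assumes F: "submodule_chain R M F p" and N: "submodule N R M" and "F p \<subseteq> N"
  shows "\<exists>F' p'. submodule_chain R M F' p' \<and> F' p' = N \<and> p' = (if F p = N then p else Suc p)"
proof (cases "F p = N")
  case True
  then show ?thesis using F by auto
next
  case False
  then have "submodule_chain R M (F(Suc p := N)) (Suc p)"
    using F N \<open>F p \<subseteq> N\<close> unfolding submodule_chain_def by (auto simp: le_Suc_eq less_Suc_eq)
  then show ?thesis using False by force
qed

lemma submodule_chain_subset_carrier:
  assumes "Module.module R M" and "submodule_chain R M F k" and "i \<le> k"
  shows "F i \<subseteq> carrier M"
  using Module.module.submoduleE(1)[OF assms(1)] assms(2,3) unfolding submodule_chain_def by simp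

lemma submodule_chain_append:
  assumes F: "submodule_chain R M F p" and G: "submodule_chain R M G q" and "F p \<subseteq> G 0"
  shows "submodule_chain R M (\<lambda>i. if i \<le> p then F i else G (i - p)) (p + q)"
  unfolding submodule_chain_def
proof (intro conjI allI impI)
  fix i assume "i \<le> p + q"
  then show "submodule (if i \<le> p then F i else G (i - p)) R M"
    using F G unfolding submodule_chain_def by simp
next
  fix i assume "i < p + q"
  then consider "Suc i \<le> p" | "i = p" "0 < q" | "p < i" "Suc i - p = Suc (i - p)" by linarith
  then show "(if i \<le> p then F i else G (i - p)) \<subset> (if Suc i \<le> p then F (Suc i) else G (Suc i - p))"
  proof cases
    case 2
    then have "G 0 \<subset> G 1" using G unfolding submodule_chain_def by simp
    then show ?thesis using 2 \<open>F p \<subseteq> G 0\<close> by auto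
  qed (use \<open>i < p + q\<close> F G in \<open>auto simp: submodule_chain_def\<close>)
qed

lemma submodule_chain_image:
  assumes M: "Module.module R M" and N: "Module.module R N" and f: "module_linear R M N f"
    and "inj_on f (carrier M)" and F: "submodule_chain R M F p"
  shows "submodule_chain R N (\<lambda>i. f ` F i) p"
  unfolding submodule_chain_def
proof (intro conjI allI impI)
  fix i assume "i \<le> p"
  then show "submodule (f ` F i) R N"
    using F submodule_image[OF M N f] unfolding submodule_chain_def by simp
next
  fix i assume "i < p"
  then have "F i \<subset> F (Suc i)" and "F (Suc i) \<subseteq> carrier M"
    using F submodule_chain_subset_carrier[OF M F] unfolding submodule_chain_def by simp_all
  then show "f ` F i \<subset> f ` F (Suc i)"
    using image_strict_mono inj_on_subset[OF \<open>inj_on f (carrier M)\<close>] by metis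
qed

lemma vimage_strict_mono_surj:
  assumes "g ` S = T" and "X \<subset> Y" and "Y \<subseteq> T"
  shows "{x \<in> S. g x \<in> X} \<subset> {x \<in> S. g x \<in> Y}"
proof -
  obtain c where c: "c \<in> Y" "c \<notin> X" using \<open>X \<subset> Y\<close> by blast
  then have "c \<in> g ` S" using assms(1,3) by auto
  then obtain x where "c = g x" "x \<in> S" by (rule imageE)
  then show ?thesis using c \<open>X \<subset> Y\<close> by auto
qed

lemma submodule_chain_vimage:
  assumes M: "Module.module R M" and N: "Module.module R N" and g: "module_linear R M N g"
    and "g ` carrier M = carrier N" and F: "submodule_chain R N F q"
  shows "submodule_chain R M (\<lambda>i. {x \<in> carrier M. g x \<in> F i}) q"
  unfolding submodule_chain_def
proof (intro conjI allI impI)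
  fix i assume "i \<le> q"
  then show "submodule {x \<in> carrier M. g x \<in> F i} R M"
    using F submodule_vimage[OF M N g] unfolding submodule_chain_def by simp
next
  fix i assume "i < q"
  then have "F i \<subset> F (Suc i)" and "F (Suc i) \<subseteq> carrier N"
    using F submodule_chain_subset_carrier[OF N F] unfolding submodule_chain_def by simp_all
  then show "{x \<in> carrier M. g x \<in> F i} \<subset> {x \<in> carrier M. g x \<in> F (Suc i)}"
    by (rule vimage_strict_mono_surj[OF \<open>g ` carrier M = carrier N\<close>])
qed

lemma chain_lengths_short_exact_add:
  assumes A: "Module.module R A" and B: "Module.module R B" and C: "Module.module R C"
    and ses: "short_exact R A B C f g"
    and "p \<in> chain_lengths R A" and "q \<in> chain_lengths R C"
  shows "p + q \<in> chain_lengths R B"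
proof -
  have f: "module_linear R A B f" and g: "module_linear R B C g"
    and inj: "inj_on f (carrier A)" and surj: "g ` carrier B = carrier C"
    and ker: "f ` carrier A = {y \<in> carrier B. g y = \<zero>\<^bsub>C\<^esub>}"
    using ses unfolding short_exact_def by auto
  obtain FA where FA: "submodule_chain R A FA p"
    using \<open>p \<in> chain_lengths R A\<close> unfolding chain_lengths_def by blast
  obtain FC where FC: "submodule_chain R C FC q"
    using \<open>q \<in> chain_lengths R C\<close> unfolding chain_lengths_def by blast
  have "\<zero>\<^bsub>C\<^esub> \<in> FC 0"
    using FC submodule_zero_closed[of "FC 0" R C] unfolding submodule_chain_def by simp
  have "f ` FA p \<subseteq> f ` carrier A"
    using submodule_chain_subset_carrier[OF A FA, of p] by (intro image_mono) simp
  also have "\<dots> \<subseteq> {y \<in> carrier B. g y \<in> FC 0}" using ker \<open>\<zero>\<^bsub>C\<^esub> \<in> FC 0\<close> by auto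
  finally have "f ` FA p \<subseteq> {y \<in> carrier B. g y \<in> FC 0}" .
  from submodule_chain_append[OF submodule_chain_image[OF A B f inj FA]
      submodule_chain_vimage[OF B C g surj FC] this]
  show ?thesis unfolding chain_lengths_def by auto
qed

lemma submodule_chain_short_exact_split:
  assumes A: "Module.module R A" and B: "Module.module R B" and C: "Module.module R C"
    and ses: "short_exact R A B C f g"
    and "submodule_chain R B FB k"
  shows "\<exists>FA p FC q. submodule_chain R A FA p \<and> submodule_chain R C FC q \<and>
      FA p = {x \<in> carrier A. f x \<in> FB k} \<and> FC q = g ` FB k \<and> k \<le> p + q"
proof -
  have f: "module_linear R A B f" and g: "module_linear R B C g"
    using ses unfolding short_exact_def by auto
  show ?thesis
    using assms(5)
  proof (induction k)
    case 0
    then have "submodule (FB 0) R B" unfolding submodule_chain_def by simp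
    then have "submodule_chain R A (\<lambda>_. {x \<in> carrier A. f x \<in> FB 0}) 0"
      and "submodule_chain R C (\<lambda>_. g ` FB 0) 0"
      using submodule_vimage[OF A B f] submodule_image[OF B C g] unfolding submodule_chain_def by auto
    then show ?case by auto
  next
    case (Suc k)
    define A' where "A' = {x \<in> carrier A. f x \<in> FB (Suc k)}"
    define C' where "C' = g ` FB (Suc k)"
    have U: "submodule (FB k) R B" and V: "submodule (FB (Suc k)) R B"
      and strict: "FB k \<subset> FB (Suc k)"
      using Suc.prems unfolding submodule_chain_def by simp_all
    have "submodule_chain R B FB k" using Suc.prems unfolding submodule_chain_def by simp
    then obtain FA p FC q where FA: "submodule_chain R A FA p" and FC: "submodule_chain R C FC q"
      and tops: "FA p = {x \<in> carrier A. f x \<in> FB k}" "FC q = g ` FB k" and "k \<le> p + q"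
      using Suc.IH by blast
    obtain FA' p' where FA': "submodule_chain R A FA' p'" "FA' p' = A'"
      and p': "p' = (if FA p = A' then p else Suc p)"
      using submodule_chain_extend[OF FA submodule_vimage[OF A B f V]] tops strict
      unfolding A'_def by blast
    obtain FC' q' where FC': "submodule_chain R C FC' q'" "FC' q' = C'"
      and q': "q' = (if FC q = C' then q else Suc q)"
      using submodule_chain_extend[OF FC submodule_image[OF B C g V]] tops strict
      unfolding C'_def by blast
    have "\<not> (FA p = A' \<and> FC q = C')"
    proof
      assume "FA p = A' \<and> FC q = C'"
      then have "FB k = FB (Suc k)"
        using short_exact_submodule_eq[OF B C ses U V] strict tops unfolding A'_def C'_def by auto
      then show False using strict by simp
    qed
    then have "Suc k \<le> p' + q'" using p' q' \<open>k \<le> p + q\<close> by auto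
    then show ?case using FA' FC' unfolding A'_def C'_def by blast
  qed
qed

lemma Sup_enat_in:
  fixes A :: "enat set"
  assumes "A \<noteq> {}" and "Sup A \<noteq> \<infinity>"
  shows "Sup A \<in> A"
  using assms unfolding Sup_enat_def by (auto split: if_splits)

theorem mod_length_short_exact:
  assumes A: "Module.module R A" and B: "Module.module R B" and C: "Module.module R C"
    and ses: "short_exact R A B C f g"
  shows "mod_length R B = mod_length R A + mod_length R C"
proof (rule antisym)
  show "mod_length R B \<le> mod_length R A + mod_length R C"
    unfolding mod_length_eq_Sup_chain_lengths
  proof (rule Sup_least)
    fix x assume "x \<in> enat ` chain_lengths R B"
    then obtain k FB where x: "x = enat k" and "submodule_chain R B FB k"
      unfolding chain_lengths_def by blast
    then obtain p q where "p \<in> chain_lengths R A" "q \<in> chain_lengths R C" "k \<le> p + q"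
      using submodule_chain_short_exact_split[OF A B C ses] unfolding chain_lengths_def by blast
    have "x \<le> enat p + enat q" using x \<open>k \<le> p + q\<close> by simp
    also have "\<dots> \<le> Sup (enat ` chain_lengths R A) + Sup (enat ` chain_lengths R C)"
      using \<open>p \<in> chain_lengths R A\<close> \<open>q \<in> chain_lengths R C\<close> by (intro add_mono Sup_upper imageI)
    finally show "x \<le> Sup (enat ` chain_lengths R A) + Sup (enat ` chain_lengths R C)" .
  qed
next
  have add: "p + q \<in> chain_lengths R B" if "p \<in> chain_lengths R A" "q \<in> chain_lengths R C" for p q
    using chain_lengths_short_exact_add[OF A B C ses that] .
  have "mod_length R A \<le> mod_length R B" "mod_length R C \<le> mod_length R B"
    unfolding mod_length_eq_Sup_chain_lengths
    using add[OF _ zero_in_chain_lengths[OF C]] add[OF zero_in_chain_lengths[OF A]]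
    by (auto intro!: Sup_subset_mono)
  show "mod_length R A + mod_length R C \<le> mod_length R B"
  proof (cases "mod_length R A = \<infinity> \<or> mod_length R C = \<infinity>")
    case True
    then show ?thesis
      using \<open>mod_length R A \<le> mod_length R B\<close> \<open>mod_length R C \<le> mod_length R B\<close> by auto
  next
    case False
    then obtain p q where "p \<in> chain_lengths R A" "mod_length R A = enat p"
      and "q \<in> chain_lengths R C" "mod_length R C = enat q"
      using Sup_enat_in[of "enat ` chain_lengths R A"] Sup_enat_in[of "enat ` chain_lengths R C"]
        zero_in_chain_lengths[OF A] zero_in_chain_lengths[OF C]
      unfolding mod_length_eq_Sup_chain_lengths by blast
    then show ?thesis
      using add unfolding mod_length_eq_Sup_chain_lengths by (auto intro: Sup_upper)
  qed
qed

corollary mod_length_short_exact_int: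
  assumes "Module.module R A" and "Module.module R B" and "Module.module R C"
    and "short_exact R A B C f g" and "mod_length R B \<noteq> \<infinity>"
  shows "int (the_enat (mod_length R A))
       = int (the_enat (mod_length R B)) - int (the_enat (mod_length R C))"
  using mod_length_short_exact[OF assms(1-4)] assms(5)
  by (cases "mod_length R A"; cases "mod_length R C") auto

definition alt_window_sum :: "nat \<Rightarrow> (int \<Rightarrow> int) \<Rightarrow> int \<Rightarrow> int" where
  "alt_window_sum d L n = (\<Sum>i<d. (if even (n + int i) then 1 else -1) * L (n + int i))"

lemma hfun_eq_alt_window_sum:
  "hfun d R Hom Sig X Y = alt_window_sum d (\<lambda>n. int (the_enat (lam R Hom Sig n X Y)))"
  by (simp add: fun_eq_iff hfun_def alt_window_sum_def)

lemma alt_window_sum_cong: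
  assumes "\<And>i. i < d \<Longrightarrow> L (n + int i) = L' (n + int i)"
  shows "alt_window_sum d L n = alt_window_sum d L' n"
  unfolding alt_window_sum_def using assms by (intro sum.cong) simp_all

lemma alt_window_sum_shift_diff:
  assumes "even d"
  shows "alt_window_sum d (\<lambda>m. L (m + 1) - L (m + int d + 1)) n
       = alt_window_sum d L (n + int d + 1) - alt_window_sum d L (n + 1)"
proof -
  define sg :: "int \<Rightarrow> int" where "sg m = (if even m then 1 else -1)" for m
  have sg_shift: "sg (n + int d + 1 + int i) = - sg (n + int i)" "sg (n + 1 + int i) = - sg (n + int i)"
    for i
    using assms unfolding sg_def by (simp_all add: algebra_simps)
  show ?thesis
    unfolding alt_window_sum_def sg_def[symmetric] sg_shift sum_subtractf[symmetric]
    by (intro sum.cong) (simp_all add: algebra_simps)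
qed

lemma alt_window_sum_shift_diff_below:
  assumes "even d" and "\<forall>m\<le>N. L' m = L (m + 1) - L (m + int d + 1)" and "n \<le> N - int d"
  shows "alt_window_sum d L' n = alt_window_sum d L (n + int d + 1) - alt_window_sum d L (n + 1)"
proof -
  have "alt_window_sum d L' n = alt_window_sum d (\<lambda>m. L (m + 1) - L (m + int d + 1)) n"
    using assms(2,3) by (intro alt_window_sum_cong) simp
  also have "\<dots> = alt_window_sum d L (n + int d + 1) - alt_window_sum d L (n + 1)"
    by (rule alt_window_sum_shift_diff[OF \<open>even d\<close>])
  finally show ?thesis .
qed

lemma delta_neg_cong_below:
  assumes "\<forall>m\<le>M. f m = g m" and "n \<le> M - int s * (int d + 1)"
  shows "delta_neg d s f n = delta_neg d s g n"
  using assms(2)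
proof (induction s arbitrary: n)
  case 0
  then show ?case using assms(1) by simp
next
  case (Suc s)
  then have "n + 1 \<le> M - int s * (int d + 1)" "n + int d + 1 \<le> M - int s * (int d + 1)"
    by (simp_all add: algebra_simps)
  then show ?case using Suc.IH by simp
qed

lemma delta_neg_uminus: "delta_neg d s (\<lambda>n. - f n) = (\<lambda>n. - delta_neg d s f n)"
  by (induction s) auto

lemma delta_neg_delta_neg: "delta_neg d s (delta_neg d t f) = delta_neg d (s + t) f"
  by (induction s) auto

lemma delta_neg_minus_delta_neg_below:
  assumes "\<forall>m\<le>M. G m = - delta_neg d 1 H m" and "n \<le> M - int t * (int d + 1)"
  shows "delta_neg d t G n = - delta_neg d (Suc t) H n"
proof -
  have "delta_neg d t G n = delta_neg d t (\<lambda>m. - delta_neg d 1 H m) n"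
    using assms by (rule delta_neg_cong_below)
  also have "\<dots> = - delta_neg d (t + 1) H n"
    by (simp only: delta_neg_uminus delta_neg_delta_neg)
  finally show ?thesis by simp
qed

theorem lemma5p2:
  fixes d :: nat
    and R0 :: "('r, 'c) ring_scheme"
    and Hom :: "'o \<Rightarrow> 'o \<Rightarrow> ('r, 'm) module"
    and Sig :: "int \<Rightarrow> 'o \<Rightarrow> 'o"
    and X Y Yz :: 'o
  assumes d_even: "even d" and d_ge: "d \<ge> 2"
    and R0_ring: "cring R0"
    and Hom_mod: "\<And>A B. Module.module R0 (Hom A B)"
    and fl: "\<And>n. lam R0 Hom Sig n X Y \<noteq> \<infinity>"
    and ses: "\<exists>N. \<forall>n\<le>N. \<exists>f g. short_exact R0
               (Hom X (Sig n Yz)) (Hom X (Sig (n + 1) Y)) (Hom X (Sig (n + int d + 1) Y)) f g"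
  shows "(\<exists>N. \<forall>n\<le>N. hfun d R0 Hom Sig X Yz n
                 = hfun d R0 Hom Sig X Y (n + int d + 1) - hfun d R0 Hom Sig X Y (n + 1))
       \<and> (\<forall>s\<ge>1. \<exists>N. \<forall>n\<le>N. delta_neg d (s - 1) (hfun d R0 Hom Sig X Yz) n
                              = - delta_neg d s (hfun d R0 Hom Sig X Y) n)"
proof -
  obtain N where N: "\<forall>n\<le>N. \<exists>f g. short_exact R0
               (Hom X (Sig n Yz)) (Hom X (Sig (n + 1) Y)) (Hom X (Sig (n + int d + 1) Y)) f g"
    using ses by blast
  let ?L = "\<lambda>n. int (the_enat (lam R0 Hom Sig n X Y))"
  let ?H = "hfun d R0 Hom Sig X Y" and ?Hz = "hfun d R0 Hom Sig X Yz"
  have lam: "\<forall>n\<le>N. int (the_enat (lam R0 Hom Sig n X Yz)) = ?L (n + 1) - ?L (n + int d + 1)"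
  proof (intro allI impI)
    fix n assume "n \<le> N"
    then obtain f g where "short_exact R0
        (Hom X (Sig n Yz)) (Hom X (Sig (n + 1) Y)) (Hom X (Sig (n + int d + 1) Y)) f g"
      using N by blast
    from mod_length_short_exact_int[OF Hom_mod Hom_mod Hom_mod this fl[of "n + 1", unfolded lam_def]]
    show "int (the_enat (lam R0 Hom Sig n X Yz)) = ?L (n + 1) - ?L (n + int d + 1)"
      unfolding lam_def .
  qed
  have h: "\<forall>n\<le>N - int d. ?Hz n = ?H (n + int d + 1) - ?H (n + 1)"
    unfolding hfun_eq_alt_window_sum by (intro allI impI alt_window_sum_shift_diff_below[OF d_even lam])
  then have "\<forall>n\<le>N - int d. ?Hz n = - delta_neg d 1 ?H n" by simp
  note delta = delta_neg_minus_delta_neg_below[OF this]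
  have "\<exists>N'. \<forall>n\<le>N'. delta_neg d (s - 1) ?Hz n = - delta_neg d s ?H n" if s: "s \<ge> 1" for s
  proof -
    obtain t where "s = Suc t" using s by (cases s) auto
    then show ?thesis using delta by (intro exI[of _ "N - int d - int t * (int d + 1)"]) simp
  qed
  then show ?thesis using h by blast
qed

end
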